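(* Let $\mathcal{H}$ be a finite-dimensional Hilbert space and $\tau$ an ergodic quantum channel on $\mathcal{H}$ whose unique fixed density matrix is pure, $|\psi_1\rangle\langle\psi_1|$. Then $\tau$ is mixing, i.e. $\tau^n(\rho)\to|\psi_1\rangle\langle\psi_1|$ for every density matrix $\rho$ on $\mathcal{H}$.
   Context: A quantum channel is a linear, completely positive, trace-preserving map on the space of linear operators on $\mathcal{H}$. It is ergodic if it has exactly one fixed point in the set of density matrices on $\mathcal{H}$; it is mixing if there is a density matrix $\rho_*$ with $\tau^n(\rho)\to\rho_*$ for every density matrix $\rho$. *)

theory Defs
  imports "HOL-Analysis.Analysis"
begin

text \<open>The finite-dimensional Hilbert space is modelled as complex^'n for a finite type 'n;
  linear operators on it are matrices complex^'n^'n.\<close>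

definition cinner :: "complex^'n::finite \<Rightarrow> complex^'n \<Rightarrow> complex" where
  "cinner u w = (\<Sum>a\<in>UNIV. cnj (u $ a) * w $ a)"

definition ctrace :: "complex^'n::finite^'n \<Rightarrow> complex" where
  "ctrace X = (\<Sum>i\<in>UNIV. X $ i $ i)"

definition cscale :: "complex \<Rightarrow> complex^'n::finite^'n \<Rightarrow> complex^'n^'n" where
  "cscale c X = (\<chi> i j. c * X $ i $ j)"

definition nonneg_c :: "complex \<Rightarrow> bool" where
  "nonneg_c z \<longleftrightarrow> Im z = 0 \<and> Re z \<ge> 0"

definition psd :: "complex^'n::finite^'n \<Rightarrow> bool" where
  "psd X \<longleftrightarrow> (\<forall>v. nonneg_c (cinner v (X *v v)))"

definition density :: "complex^'n::finite^'n \<Rightarrow> bool" where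
  "density X \<longleftrightarrow> psd X \<and> ctrace X = 1"

text \<open>A k x k block matrix with blocks in complex^'n^'n (an operator on C^k tensor C^n)
  is positive semidefinite.\<close>
definition psd_block :: "nat \<Rightarrow> (nat \<Rightarrow> nat \<Rightarrow> complex^'n::finite^'n) \<Rightarrow> bool" where
  "psd_block k X \<longleftrightarrow>
     (\<forall>v :: nat \<Rightarrow> complex^'n. nonneg_c (\<Sum>i<k. \<Sum>j<k. cinner (v i) (X i j *v v j)))"

definition clinear_map :: "(complex^'n::finite^'n \<Rightarrow> complex^'n^'n) \<Rightarrow> bool" where
  "clinear_map T \<longleftrightarrow> (\<forall>X Y c. T (X + Y) = T X + T Y \<and> T (cscale c X) = cscale c (T X))"

text \<open>Complete positivity: id_k tensor T (acting blockwise) is positive for every k.\<close>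
definition completely_positive :: "(complex^'n::finite^'n \<Rightarrow> complex^'n^'n) \<Rightarrow> bool" where
  "completely_positive T \<longleftrightarrow>
     (\<forall>k X. psd_block k X \<longrightarrow> psd_block k (\<lambda>i j. T (X i j)))"

definition trace_preserving :: "(complex^'n::finite^'n \<Rightarrow> complex^'n^'n) \<Rightarrow> bool" where
  "trace_preserving T \<longleftrightarrow> (\<forall>X. ctrace (T X) = ctrace X)"

definition quantum_channel :: "(complex^'n::finite^'n \<Rightarrow> complex^'n^'n) \<Rightarrow> bool" where
  "quantum_channel T \<longleftrightarrow> clinear_map T \<and> completely_positive T \<and> trace_preserving T"

definition ergodic :: "(complex^'n::finite^'n \<Rightarrow> complex^'n^'n) \<Rightarrow> bool" where
  "ergodic T \<longleftrightarrow> (\<exists>!\<rho>. density \<rho> \<and> T \<rho> = \<rho>)"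

definition mixing :: "(complex^'n::finite^'n \<Rightarrow> complex^'n^'n) \<Rightarrow> bool" where
  "mixing T \<longleftrightarrow> (\<exists>\<rho>s. density \<rho>s \<and> (\<forall>\<rho>. density \<rho> \<longrightarrow> (\<lambda>m. (T ^^ m) \<rho>) \<longlonglongrightarrow> \<rho>s))"

definition ketbra :: "complex^'n::finite \<Rightarrow> complex^'n^'n" where
  "ketbra \<psi> = (\<chi> i j. \<psi> $ i * cnj (\<psi> $ j))"

end

theory Submission
  imports Defs
begin

text \<open>Let \<open>P = |\<psi>\<rangle>\<langle>\<psi>|\<close>, \<open>Q = 1 - P\<close> and \<open>perp X = tr (Q X Q)\<close>. For a positive
  trace-preserving map \<open>S\<close> fixing \<open>P\<close>, positivity of \<open>S ((P + t Q) X (P + t Q)\<^sup>*)\<close> for all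
  \<open>t\<close> kills the contribution of the off-diagonal blocks of \<open>X\<close> to \<open>perp (S X)\<close>, whence
  \<open>perp (S X) = perp X - \<langle>\<psi>| S (Q X Q) |\<psi>\<rangle> \<le> perp X\<close>. So \<open>perp (\<tau>\<^sup>n \<rho>)\<close> decreases to
  a limit \<open>L\<close>, and every limit point \<open>\<sigma>\<close> of \<open>\<tau>\<^sup>n \<rho>\<close> satisfies \<open>perp (\<tau>\<^sup>k \<sigma>) = L\<close> for all
  \<open>k\<close>. If \<open>L = 0\<close> then \<open>\<sigma> = P\<close>. If \<open>L > 0\<close> then \<open>Q \<sigma> Q / L\<close> is a density matrix whose
  whole orbit is orthogonal to \<open>\<psi>\<close>; the densities with this property form a compact convex
  \<open>\<tau>\<close>-invariant set, so by Brouwer's theorem \<open>\<tau>\<close> has a fixed density in it, which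
  contradicts ergodicity. Hence \<open>P\<close> is the only limit point, and by compactness of the
  density matrices \<open>\<tau>\<^sup>n \<rho> \<rightarrow> P\<close>.\<close>

definition cadjoint :: "complex^'n::finite^'n \<Rightarrow> complex^'n^'n" where
  "cadjoint A = (\<chi> i j. cnj (A $ j $ i))"

lemma cinner_cadjoint: "cinner u (A *v w) = cinner (cadjoint A *v u) w"
proof -
  have "cinner u (A *v w) = (\<Sum>a\<in>UNIV. \<Sum>b\<in>UNIV. cnj (u $ a) * A $ a $ b * w $ b)"
    unfolding cinner_def matrix_vector_mult_def by (simp add: sum_distrib_left mult.assoc)
  also have "\<dots> = (\<Sum>b\<in>UNIV. \<Sum>a\<in>UNIV. cnj (u $ a) * A $ a $ b * w $ b)"
    by (rule sum.swap)
  also have "\<dots> = cinner (cadjoint A *v u) w"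
    unfolding cinner_def matrix_vector_mult_def cadjoint_def
    by (simp add: sum_distrib_left sum_distrib_right cnj_sum mult_ac)
  finally show ?thesis .
qed

lemma cadjoint_add: "cadjoint (A + B) = cadjoint A + cadjoint B"
  by (simp add: cadjoint_def vec_eq_iff)

lemma cadjoint_cscale: "cadjoint (cscale c A) = cscale (cnj c) (cadjoint A)"
  by (simp add: cadjoint_def vec_eq_iff cscale_def)

lemma cinner_add_left: "cinner (u + v) w = cinner u w + cinner v w"
  unfolding cinner_def by (simp add: ring_distribs sum.distrib)

lemma cinner_add_right: "cinner w (u + v) = cinner w u + cinner w v"
  unfolding cinner_def by (simp add: ring_distribs sum.distrib)

lemma cinner_smult_left: "cinner (t *s u) w = cnj t * cinner u w"
  by (simp add: cinner_def sum_distrib_left mult_ac)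

lemma cinner_smult_right: "cinner u (t *s w) = t * cinner u w"
  by (simp add: cinner_def sum_distrib_left mult_ac)

lemma cinner_axis_left: "cinner (axis j 1) v = v $ j"
proof -
  have "cinner (axis j 1) v = (\<Sum>a\<in>UNIV. if a = j then v $ a else 0)"
    unfolding cinner_def by (rule sum.cong) (auto simp: axis_def)
  then show ?thesis by simp
qed

lemma matrix_vector_mult_smult:
  fixes X :: "'a::comm_semiring_1^'n::finite^'m"
  shows "X *v (t *s v) = t *s (X *v v)"
  unfolding matrix_vector_mult_def vec_eq_iff
  by (simp add: sum_distrib_left) (intro allI sum.cong refl, simp add: mult_ac)

lemma matrix_vector_mult_axis_component:
  fixes M :: "'a::semiring_1^'n::finite^'m"
  shows "(M *v axis k 1) $ i = M $ i $ k"
proof -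
  have "(M *v axis k 1) $ i = (\<Sum>a\<in>UNIV. if a = k then M $ i $ a else 0)"
    unfolding matrix_vector_mult_def vec_lambda_beta by (rule sum.cong) (auto simp: axis_def)
  then show ?thesis by simp
qed

lemma cinner_axis_matrix_axis: "cinner (axis i 1) (X *v axis j 1) = X $ i $ j"
  by (simp add: cinner_axis_left matrix_vector_mult_axis_component)

lemma matrix_triple_product_entry:
  "(A ** X ** C) $ j $ k = cinner (cadjoint A *v axis j 1) (X *v (C *v axis k 1))"
proof -
  have "(A ** X ** C) $ j $ k = cinner (axis j 1) (A *v (X *v (C *v axis k 1)))"
    by (simp only: cinner_axis_matrix_axis matrix_vector_mul_assoc matrix_mul_assoc)
  then show ?thesis by (simp only: cinner_cadjoint)
qed

lemma cinner_matrix_add: "cinner u ((X + Y) *v w) = cinner u (X *v w) + cinner u (Y *v w)"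
  by (simp add: matrix_vector_mult_add_rdistrib cinner_add_right)

lemma cinner_matrix_cscale: "cinner u (cscale c X *v w) = c * cinner u (X *v w)"
  by (simp add: cinner_def matrix_vector_mult_def cscale_def sum_distrib_left mult_ac)

lemma matrix_add_rdistrib:
  fixes A B C :: "'a::semiring_1^'n::finite^'n"
  shows "(A + B) ** C = A ** C + B ** C"
  by (simp add: matrix_matrix_mult_def vec_eq_iff ring_distribs sum.distrib)

lemma matrix_diff_ldistrib:
  fixes A B C :: "'a::ring_1^'n::finite^'n"
  shows "C ** (A - B) = C ** A - C ** B"
  by (simp add: matrix_matrix_mult_def vec_eq_iff right_diff_distrib sum_subtractf)

lemma matrix_diff_rdistrib:
  fixes A B C :: "'a::ring_1^'n::finite^'n"
  shows "(A - B) ** C = A ** C - B ** C"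
  by (simp add: matrix_matrix_mult_def vec_eq_iff left_diff_distrib sum_subtractf)

lemma matrix_mul_lzero: "(0::'a::semiring_1^'n::finite^'n) ** A = 0"
  by (simp add: matrix_matrix_mult_def vec_eq_iff)

lemma cscale_matrix_mult_left: "cscale c A ** B = cscale c (A ** B)"
  by (simp add: matrix_matrix_mult_def vec_eq_iff cscale_def sum_distrib_left mult.assoc)

lemma cscale_matrix_mult_right: "A ** cscale c B = cscale c (A ** B)"
  by (simp add: matrix_matrix_mult_def vec_eq_iff cscale_def sum_distrib_left mult_ac)

lemma cscale_add: "cscale c (A + B) = cscale c A + cscale c B"
  by (simp add: vec_eq_iff cscale_def ring_distribs)

lemma cscale_cscale: "cscale a (cscale b A) = cscale (a * b) A"
  by (simp add: vec_eq_iff cscale_def mult.assoc)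

lemma scaleR_eq_cscale: "r *\<^sub>R (X::complex^'n::finite^'n) = cscale (of_real r) X"
  unfolding vec_eq_iff cscale_def vector_scaleR_component vec_lambda_beta
  by (simp only: scaleR_conv_of_real[where 'a=complex] simp_thms)

lemma ctrace_add: "ctrace (A + B) = ctrace A + ctrace B"
  by (simp add: ctrace_def sum.distrib)

lemma ctrace_diff: "ctrace (A - B) = ctrace A - ctrace B"
  by (simp add: ctrace_def sum_subtractf)

lemma ctrace_cscale: "ctrace (cscale c A) = c * ctrace A"
  by (simp add: ctrace_def cscale_def sum_distrib_left)

lemma ctrace_matrix_mult_commute: "ctrace ((A::complex^'n::finite^'n) ** B) = ctrace (B ** A)"
proof -
  have "ctrace (A ** B) = (\<Sum>i\<in>UNIV. \<Sum>k\<in>UNIV. A $ i $ k * B $ k $ i)"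
    unfolding ctrace_def matrix_matrix_mult_def by simp
  also have "\<dots> = (\<Sum>k\<in>UNIV. \<Sum>i\<in>UNIV. A $ i $ k * B $ k $ i)"
    by (rule sum.swap)
  also have "\<dots> = ctrace (B ** A)"
    unfolding ctrace_def matrix_matrix_mult_def by (simp add: mult.commute)
  finally show ?thesis .
qed

lemma linear_cscale_functional:
  fixes h :: "complex^'n::finite^'n \<Rightarrow> complex"
  assumes "\<And>X Y. h (X + Y) = h X + h Y" and "\<And>c X. h (cscale c X) = c * h X"
  shows "linear h"
  by (rule linearI) (simp_all add: assms scaleR_eq_cscale scaleR_conv_of_real)

lemma clinear_map_imp_linear: "clinear_map T \<Longrightarrow> linear T"
  by (rule linearI) (simp_all add: clinear_map_def scaleR_eq_cscale)

section \<open>Positive semidefinite matrices and density matrices\<close>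

lemma nonneg_c_add: "nonneg_c a \<Longrightarrow> nonneg_c b \<Longrightarrow> nonneg_c (a + b)"
  by (simp add: nonneg_c_def)

lemma nonneg_c_sum: "(\<And>i. i \<in> S \<Longrightarrow> nonneg_c (h i)) \<Longrightarrow> nonneg_c (sum h S)"
  by (induction S rule: infinite_finite_induct) (auto simp: nonneg_c_def)

lemma nonneg_c_mult: "nonneg_c a \<Longrightarrow> nonneg_c b \<Longrightarrow> nonneg_c (a * b)"
  by (simp add: nonneg_c_def)

lemma psd_diag: "psd X \<Longrightarrow> nonneg_c (X $ i $ i)"
  unfolding psd_def by (metis cinner_axis_matrix_axis)

lemma psd_ctrace: "psd X \<Longrightarrow> nonneg_c (ctrace X)"
  unfolding ctrace_def by (intro nonneg_c_sum psd_diag)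

lemma psd_add: "psd X \<Longrightarrow> psd Y \<Longrightarrow> psd (X + Y)"
  unfolding psd_def by (simp add: cinner_matrix_add nonneg_c_add)

lemma psd_cscale: "nonneg_c c \<Longrightarrow> psd X \<Longrightarrow> psd (cscale c X)"
  unfolding psd_def by (simp add: cinner_matrix_cscale nonneg_c_mult)

lemma psd_congruence: "psd X \<Longrightarrow> psd (A ** X ** cadjoint A)"
  unfolding psd_def
proof
  fix v assume "\<forall>v. nonneg_c (cinner v (X *v v))"
  moreover have "cinner v ((A ** X ** cadjoint A) *v v) = cinner (cadjoint A *v v) (X *v (cadjoint A *v v))"
    by (simp only: matrix_vector_mul_assoc[symmetric] matrix_mul_assoc[symmetric] cinner_cadjoint)
  ultimately show "nonneg_c (cinner v ((A ** X ** cadjoint A) *v v))" by simp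
qed

text \<open>At \<open>s = -Re z / (Re e + 1)\<close> the hypothesis, scaled by \<open>(Re e + 1)\<^sup>2\<close>, reads
  \<open>-(Re z)\<^sup>2 \<ge> 0\<close>.\<close>
lemma nonneg_c_real_quadratic_imp_zero:
  assumes h: "\<And>s::real. nonneg_c (of_real s * z + of_real (s\<^sup>2) * e)"
  shows "z = 0"
proof -
  have h1: "Im z + Im e = 0" "Re z + Re e \<ge> 0" using h[of 1] by (auto simp: nonneg_c_def)
  have h2: "- Im z + Im e = 0" "- Re z + Re e \<ge> 0" using h[of "-1"] by (auto simp: nonneg_c_def)
  have im: "Im z = 0" using h1 h2 by linarith
  define x where "x = Re z"
  define E where "E = Re e"
  have E0: "E \<ge> 0" using h1 h2 by (simp add: x_def E_def)
  define s where "s = - x / (E + 1)"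
  have "s * x + s * s * E \<ge> 0"
    using h[of s] by (simp add: nonneg_c_def x_def E_def power2_eq_square)
  then have "(s * x + s * s * E) * ((E + 1) * (E + 1)) \<ge> 0"
    using E0 by (intro mult_nonneg_nonneg) auto
  moreover have "(s * x + s * s * E) * ((E + 1) * (E + 1)) = - (x * x)"
  proof -
    have u: "s * (E + 1) = - x" using E0 by (simp add: s_def)
    have "(s * x + s * s * E) * ((E + 1) * (E + 1))
        = x * (E + 1) * (s * (E + 1)) + (s * (E + 1)) * (s * (E + 1)) * E"
      by (simp add: algebra_simps)
    also have "\<dots> = - (x * x)" unfolding u by (simp add: algebra_simps)
    finally show ?thesis .
  qed
  ultimately have "x * x \<le> 0" by simp
  then have "x = 0" by (auto simp: mult_le_0_iff)
  then show ?thesis using im by (simp add: complex_eq_iff x_def)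
qed

lemma nonneg_c_hermitian_quadratic_imp_zero:
  assumes h: "\<And>t::complex. nonneg_c (cnj t * a + t * b + t * cnj t * e)"
  shows "a = 0 \<and> b = 0"
proof -
  have "a + b = 0"
  proof (rule nonneg_c_real_quadratic_imp_zero)
    fix s :: real
    have "cnj (of_real s) * a + of_real s * b + of_real s * cnj (of_real s) * e
        = of_real s * (a + b) + of_real (s\<^sup>2) * e"
      by (simp add: distrib_left power2_eq_square)
    then show "nonneg_c (of_real s * (a + b) + of_real (s\<^sup>2) * e)"
      using h[of "of_real s"] by simp
  qed
  moreover have "\<i> * (b - a) = 0"
  proof (rule nonneg_c_real_quadratic_imp_zero)
    fix s :: real
    have "cnj (\<i> * of_real s) * a + \<i> * of_real s * b + \<i> * of_real s * cnj (\<i> * of_real s) * e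
        = of_real s * (\<i> * (b - a)) + of_real (s\<^sup>2) * e"
      by (simp add: right_diff_distrib distrib_left power2_eq_square mult_ac)
    then show "nonneg_c (of_real s * (\<i> * (b - a)) + of_real (s\<^sup>2) * e)"
      using h[of "\<i> * of_real s"] by simp
  qed
  ultimately show ?thesis by simp
qed

lemma psd_null_vector:
  assumes "psd X" and "cinner w (X *v w) = 0"
  shows "cinner v (X *v w) = 0 \<and> cinner w (X *v v) = 0"
proof (rule nonneg_c_hermitian_quadratic_imp_zero)
  fix t
  have "cinner (w + t *s v) (X *v (w + t *s v))
      = cinner w (X *v w) + cnj t * cinner v (X *v w) + t * cinner w (X *v v)
        + t * cnj t * cinner v (X *v v)"
    by (simp add: matrix_vector_right_distrib cinner_add_left cinner_add_right
        cinner_smult_left cinner_smult_right matrix_vector_mult_smult mult_ac add_ac distrib_left)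
  then show "nonneg_c (cnj t * cinner v (X *v w) + t * cinner w (X *v v) + t * cnj t * cinner v (X *v v))"
    using assms unfolding psd_def by (metis add_0)
qed

lemma psd_two_point_form:
  assumes "psd X"
  shows "nonneg_c (X $ i $ i + t * X $ i $ j + cnj t * X $ j $ i + cnj t * t * X $ j $ j)"
proof -
  have "cinner (axis i 1 + t *s axis j 1) (X *v (axis i 1 + t *s axis j 1))
      = X $ i $ i + t * X $ i $ j + cnj t * X $ j $ i + cnj t * t * X $ j $ j"
    by (simp add: matrix_vector_right_distrib cinner_add_left cinner_add_right cinner_smult_left
        cinner_smult_right matrix_vector_mult_smult cinner_axis_matrix_axis add_ac distrib_left)
  then show ?thesis using assms unfolding psd_def by metis
qed

lemma density_diag_bounds:
  assumes "density X"
  shows "0 \<le> Re (X $ i $ i)" "Re (X $ i $ i) \<le> 1"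
proof -
  have nn: "nonneg_c (X $ k $ k)" for k using assms psd_diag by (auto simp: density_def)
  then show "0 \<le> Re (X $ i $ i)" by (simp add: nonneg_c_def)
  have "Re (X $ i $ i) \<le> (\<Sum>k\<in>UNIV. Re (X $ k $ k))"
    by (rule member_le_sum) (use nn in \<open>auto simp: nonneg_c_def\<close>)
  also have "\<dots> = 1"
    using assms by (simp add: density_def ctrace_def flip: Re_sum)
  finally show "Re (X $ i $ i) \<le> 1" .
qed

lemma density_entry_bound:
  assumes "density X"
  shows "cmod (X $ i $ j) \<le> 2"
proof -
  have p: "psd X" using assms by (simp add: density_def)
  note d = density_diag_bounds[OF assms, of i] density_diag_bounds[OF assms, of j]
  have "nonneg_c (X $ i $ i + X $ i $ j + X $ j $ i + X $ j $ j)"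
    "nonneg_c (X $ i $ i - X $ i $ j - X $ j $ i + X $ j $ j)"
    "nonneg_c (X $ i $ i + \<i> * X $ i $ j - \<i> * X $ j $ i + X $ j $ j)"
    "nonneg_c (X $ i $ i - \<i> * X $ i $ j + \<i> * X $ j $ i + X $ j $ j)"
    using psd_two_point_form[OF p, of i 1 j] psd_two_point_form[OF p, of i "-1" j]
      psd_two_point_form[OF p, of i "\<i>" j] psd_two_point_form[OF p, of i "-\<i>" j]
    by simp_all
  then have "\<bar>Re (X $ i $ j)\<bar> \<le> 1" "\<bar>Im (X $ i $ j)\<bar> \<le> 1"
    using d by (auto simp: nonneg_c_def)
  then show ?thesis using cmod_le[of "X $ i $ j"] by linarith
qed

lemma density_norm_bound:
  assumes "density (X::complex^'n::finite^'n)"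
  shows "norm X \<le> 2 * CARD('n) * CARD('n)"
proof -
  have "norm X \<le> (\<Sum>i\<in>UNIV. norm (X $ i))"
    by (simp add: norm_vec_def L2_set_le_sum)
  also have "\<dots> \<le> (\<Sum>i\<in>UNIV. \<Sum>j\<in>UNIV. norm (X $ i $ j))"
    by (intro sum_mono) (simp add: norm_vec_def L2_set_le_sum)
  also have "\<dots> \<le> (\<Sum>i\<in>(UNIV::'n set). \<Sum>j\<in>(UNIV::'n set). (2::real))"
    by (intro sum_mono density_entry_bound[OF assms])
  finally show ?thesis by simp
qed

lemma nonneg_c_sum_eq_zero:
  assumes "finite S" and "\<And>i. i \<in> S \<Longrightarrow> nonneg_c (h i)" and "sum h S = 0" and "i \<in> S"
  shows "h i = 0"
proof -
  have "(\<Sum>i\<in>S. Re (h i)) = 0"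
    using assms(3) by (simp flip: Re_sum)
  then have "Re (h i) = 0"
    using assms by (subst (asm) sum_nonneg_eq_0_iff) (auto simp: nonneg_c_def)
  then show ?thesis
    using assms(2)[OF assms(4)] by (simp add: nonneg_c_def complex_eq_iff)
qed

lemma convex_density: "convex {X::complex^'n::finite^'n. density X}"
proof (rule convexI)
  fix X Y :: "complex^'n^'n" and u v :: real
  assume "X \<in> {X. density X}" "Y \<in> {X. density X}" "0 \<le> u" "0 \<le> v" "u + v = 1"
  then show "u *\<^sub>R X + v *\<^sub>R Y \<in> {X. density X}"
    by (auto simp: density_def scaleR_eq_cscale ctrace_add ctrace_cscale nonneg_c_def
        intro!: psd_add psd_cscale simp flip: of_real_add)
qed

lemma closed_nonneg_c_preimage:
  fixes h :: "'a::topological_space \<Rightarrow> complex"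
  assumes "continuous_on UNIV h"
  shows "closed {x. nonneg_c (h x)}"
proof -
  have "{x. nonneg_c (h x)} = {x. Im (h x) = 0} \<inter> {x. 0 \<le> Re (h x)}"
    by (auto simp: nonneg_c_def)
  moreover have "closed {x. Im (h x) = 0}" "closed {x. 0 \<le> Re (h x)}"
    by (auto intro!: closed_Collect_eq closed_Collect_le continuous_intros assms)
  ultimately show ?thesis by auto
qed

lemma closed_density: "closed {X::complex^'n::finite^'n. density X}"
proof -
  have "{X::complex^'n^'n. density X} = (\<Inter>v. {X. nonneg_c (cinner v (X *v v))}) \<inter> {X. ctrace X = 1}"
    by (auto simp: density_def psd_def)
  moreover have "linear (\<lambda>X::complex^'n^'n. cinner v (X *v v))" for v
    by (rule linear_cscale_functional) (simp_all add: cinner_matrix_add cinner_matrix_cscale)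
  moreover have "linear (ctrace :: complex^'n^'n \<Rightarrow> complex)"
    by (rule linear_cscale_functional) (simp_all add: ctrace_add ctrace_cscale)
  ultimately show ?thesis
    by (auto intro!: closed_Int closed_INT closed_nonneg_c_preimage closed_Collect_eq
        continuous_on_const linear_continuous_on simp: linear_conv_bounded_linear)
qed

lemma compact_density: "compact {X::complex^'n::finite^'n. density X}"
  unfolding compact_eq_bounded_closed
  using closed_density density_norm_bound by (auto simp: bounded_iff)

lemma tendsto_if_subseq_limits_eq:
  fixes x :: "nat \<Rightarrow> 'a::topological_space"
  assumes "seq_compact K" and "\<And>n. x n \<in> K"
    and limits: "\<And>r l. strict_mono r \<Longrightarrow> (x \<circ> r) \<longlonglongrightarrow> l \<Longrightarrow> l = p"
  shows "x \<longlonglongrightarrow> p"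
proof (rule topological_tendstoI, rule ccontr)
  fix S assume S: "open S" "p \<in> S" and ne: "\<not> eventually (\<lambda>n. x n \<in> S) sequentially"
  obtain r :: "nat \<Rightarrow> nat" where r: "strict_mono r" and out: "\<And>n. x (r n) \<notin> S"
    using not_eventually_sequentiallyD[OF ne] by blast
  obtain l r' where "strict_mono r'" and lim: "((x \<circ> r) \<circ> r') \<longlonglongrightarrow> l"
    using \<open>seq_compact K\<close> \<open>\<And>n. x n \<in> K\<close> unfolding seq_compact_def by (metis comp_apply)
  then have "l = p"
    using r by (intro limits[of "r \<circ> r'"]) (simp_all add: strict_mono_o o_assoc)
  have "eventually (\<lambda>n. ((x \<circ> r) \<circ> r') n \<in> S) sequentially"
    using topological_tendstoD[OF lim[unfolded \<open>l = p\<close>] S] .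
  then show False
    using out by (simp add: eventually_sequentially)
qed

definition positive_tp :: "(complex^'n::finite^'n \<Rightarrow> complex^'n^'n) \<Rightarrow> bool" where
  "positive_tp S \<longleftrightarrow> clinear_map S \<and> (\<forall>X. psd X \<longrightarrow> psd (S X)) \<and> trace_preserving S"

lemma positive_tpD:
  assumes "positive_tp S"
  shows "S (X + Y) = S X + S Y" "S (cscale c X) = cscale c (S X)"
    "psd X \<Longrightarrow> psd (S X)" "ctrace (S X) = ctrace X"
  using assms by (simp_all add: positive_tp_def clinear_map_def trace_preserving_def)

lemma positive_tp_density: "positive_tp S \<Longrightarrow> density X \<Longrightarrow> density (S X)"
  by (simp add: density_def positive_tpD)

lemma positive_tp_funpow:
  assumes "positive_tp S"
  shows "positive_tp (S ^^ k)"
  using assms by (induction k) (simp_all add: positive_tp_def clinear_map_def trace_preserving_def)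

text \<open>Complete positivity is only used at level \<open>k = 1\<close>.\<close>
lemma quantum_channel_imp_positive_tp:
  fixes T :: "complex^'n::finite^'n \<Rightarrow> complex^'n^'n"
  assumes "quantum_channel T"
  shows "positive_tp T"
proof -
  have "psd (T X)" if "psd X" for X
  proof -
    have "psd_block 1 (\<lambda>i j. X)"
      using that by (simp add: psd_block_def psd_def)
    then have "psd_block 1 (\<lambda>i j. T X)"
      using assms by (simp add: quantum_channel_def completely_positive_def)
    then have block: "\<forall>w::nat \<Rightarrow> complex^'n. nonneg_c (\<Sum>i<1. \<Sum>j<1. cinner (w i) (T X *v w j))"
      unfolding psd_block_def .
    have "nonneg_c (cinner v (T X *v v))" for v
      using block[rule_format, of "\<lambda>_. v"] by simp
    then show ?thesis by (simp add: psd_def)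
  qed
  then show ?thesis
    using assms by (simp add: positive_tp_def quantum_channel_def)
qed

section \<open>Positive maps fixing a pure state\<close>

locale unit_vector =
  fixes \<psi> :: "complex^'n::finite"
  assumes cinner_self: "cinner \<psi> \<psi> = 1"
begin

definition P :: "complex^'n^'n" where "P = ketbra \<psi>"
definition Q :: "complex^'n^'n" where "Q = mat 1 - P"

definition fid :: "complex^'n^'n \<Rightarrow> complex" where "fid X = cinner \<psi> (X *v \<psi>)"
definition perp :: "complex^'n^'n \<Rightarrow> complex" where "perp X = ctrace (Q ** X ** Q)"

lemma cadjoint_P: "cadjoint P = P"
  by (simp add: cadjoint_def P_def ketbra_def vec_eq_iff mult.commute)

lemma cadjoint_Q: "cadjoint Q = Q"
  using cadjoint_P by (simp add: cadjoint_def Q_def vec_eq_iff mat_def)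

lemma P_mult_psi: "P *v \<psi> = \<psi>"
proof -
  have "(\<Sum>j\<in>UNIV. \<psi> $ i * cnj (\<psi> $ j) * \<psi> $ j) = \<psi> $ i" for i
    using cinner_self by (simp add: cinner_def mult.assoc flip: sum_distrib_left)
  then show ?thesis by (simp add: P_def ketbra_def matrix_vector_mult_def vec_eq_iff)
qed

lemma P_idem: "P ** P = P"
proof -
  have "(P ** P) $ i $ j = \<psi> $ i * cnj (\<psi> $ j) * (\<Sum>k\<in>UNIV. cnj (\<psi> $ k) * \<psi> $ k)" for i j
    by (simp add: matrix_matrix_mult_def P_def ketbra_def sum_distrib_left mult_ac)
  then show ?thesis
    using cinner_self by (simp add: vec_eq_iff cinner_def P_def ketbra_def)
qed

lemma Q_P: "Q ** P = 0"
  by (simp add: Q_def matrix_diff_rdistrib P_idem)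

lemma Q_idem: "Q ** Q = Q"
  by (simp add: Q_def matrix_diff_rdistrib matrix_diff_ldistrib P_idem)

lemma Q_mult_psi: "Q *v \<psi> = 0"
  by (simp add: Q_def matrix_vector_mult_diff_rdistrib P_mult_psi)

lemma fid_add: "fid (X + Y) = fid X + fid Y"
  by (simp add: fid_def cinner_matrix_add)

lemma fid_cscale: "fid (cscale c X) = c * fid X"
  by (simp add: fid_def cinner_matrix_cscale)

lemma perp_add: "perp (X + Y) = perp X + perp Y"
  by (simp add: perp_def matrix_add_ldistrib matrix_add_rdistrib ctrace_add)

lemma perp_cscale: "perp (cscale c X) = c * perp X"
  by (simp add: perp_def cscale_matrix_mult_left cscale_matrix_mult_right ctrace_cscale)

lemma linear_fid: "linear fid"
  by (rule linear_cscale_functional) (simp_all add: fid_add fid_cscale)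

lemma linear_perp: "linear perp"
  by (rule linear_cscale_functional) (simp_all add: perp_add perp_cscale)

lemma ctrace_P_mult: "ctrace (P ** X) = fid X"
proof -
  have "ctrace (P ** X) = (\<Sum>i\<in>UNIV. \<Sum>k\<in>UNIV. \<psi> $ i * cnj (\<psi> $ k) * X $ k $ i)"
    by (simp add: ctrace_def matrix_matrix_mult_def P_def ketbra_def)
  also have "\<dots> = (\<Sum>k\<in>UNIV. \<Sum>i\<in>UNIV. \<psi> $ i * cnj (\<psi> $ k) * X $ k $ i)"
    by (rule sum.swap)
  also have "\<dots> = fid X"
    by (simp add: fid_def cinner_def matrix_vector_mult_def sum_distrib_left mult_ac)
  finally show ?thesis .
qed

lemma ctrace_eq_fid_add_perp: "ctrace X = fid X + perp X"
proof -
  have "perp X = ctrace (Q ** (Q ** X))"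
    unfolding perp_def by (rule ctrace_matrix_mult_commute)
  also have "\<dots> = ctrace (Q ** X)"
    by (simp add: matrix_mul_assoc Q_idem)
  also have "\<dots> = ctrace X - fid X"
    by (simp add: Q_def matrix_diff_rdistrib ctrace_diff ctrace_P_mult)
  finally show ?thesis by simp
qed

lemma P_sandwich: "P ** X ** P = cscale (fid X) P"
proof -
  have "(P ** X ** P) $ i $ j = \<psi> $ i * (\<Sum>k\<in>UNIV. \<Sum>l\<in>UNIV. cnj (\<psi> $ k) * X $ k $ l * \<psi> $ l) * cnj (\<psi> $ j)"
    for i j
    by (simp add: matrix_matrix_mult_def P_def ketbra_def sum_distrib_left sum_distrib_right mult_ac)
      (subst sum.swap, simp add: mult_ac)
  moreover have "(\<Sum>k\<in>UNIV. \<Sum>l\<in>UNIV. cnj (\<psi> $ k) * X $ k $ l * \<psi> $ l) = fid X"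
    by (simp add: fid_def cinner_def matrix_vector_mult_def sum_distrib_left mult_ac)
  ultimately show ?thesis by (simp add: vec_eq_iff cscale_def P_def ketbra_def mult_ac)
qed

lemma fid_P: "fid P = 1"
  by (simp add: fid_def P_mult_psi cinner_self)

lemma perp_P: "perp P = 0"
  by (simp add: perp_def Q_P matrix_mul_lzero ctrace_def)

lemma fid_Q_sandwich: "fid (Q ** X ** Q) = 0"
proof -
  have "(Q ** X ** Q) *v \<psi> = Q *v (X *v (Q *v \<psi>))"
    by (simp only: matrix_vector_mul_assoc matrix_mul_assoc)
  then show ?thesis by (simp add: fid_def Q_mult_psi cinner_def)
qed

lemma perp_Q_sandwich: "perp (Q ** X ** Q) = perp X"
proof -
  have "Q ** (Q ** X ** Q) ** Q = (Q ** Q) ** X ** (Q ** Q)"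
    by (simp only: matrix_mul_assoc)
  then show ?thesis by (simp add: perp_def Q_idem)
qed

lemma block_decomposition: "X = P ** X ** P + P ** X ** Q + Q ** X ** P + Q ** X ** Q"
proof -
  have "X = (P + Q) ** X ** (P + Q)" by (simp add: Q_def)
  then show ?thesis by (simp add: matrix_add_ldistrib matrix_add_rdistrib add_ac)
qed

lemma psd_P: "psd P"
proof -
  have "cinner v (P *v v) = cnj (cinner \<psi> v) * cinner \<psi> v" for v
    by (simp add: P_def ketbra_def cinner_def matrix_vector_mult_def cnj_sum sum_distrib_left
        sum_distrib_right mult_ac) (subst sum.swap, simp add: mult_ac)
  then show ?thesis by (simp add: psd_def nonneg_c_def)
qed

lemma density_P: "density P"
  using psd_P fid_P perp_P ctrace_eq_fid_add_perp by (simp add: density_def)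

lemma psd_fid_nonneg: "psd X \<Longrightarrow> nonneg_c (fid X)"
  by (simp add: fid_def psd_def)

lemma psd_perp_nonneg: "psd X \<Longrightarrow> nonneg_c (perp X)"
  using psd_congruence[of X Q] cadjoint_Q psd_ctrace by (metis perp_def)

lemma perp_map_P_sandwich:
  assumes "clinear_map S" and "S P = P"
  shows "perp (S (P ** X ** P)) = 0"
  using assms by (simp add: P_sandwich clinear_map_def perp_cscale perp_P)

lemma perp_sandwich_expansion:
  assumes "clinear_map S" and "S P = P"
  shows "perp (S ((P + cscale t Q) ** X ** cadjoint (P + cscale t Q)))
    = cnj t * perp (S (P ** X ** Q)) + t * perp (S (Q ** X ** P)) + t * cnj t * perp (S (Q ** X ** Q))"
proof -
  have "(P + cscale t Q) ** X ** cadjoint (P + cscale t Q)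
      = P ** X ** P + cscale (cnj t) (P ** X ** Q) + cscale t (Q ** X ** P)
        + cscale (t * cnj t) (Q ** X ** Q)"
    by (simp add: cadjoint_add cadjoint_cscale cadjoint_P cadjoint_Q matrix_add_ldistrib
        matrix_add_rdistrib cscale_matrix_mult_left cscale_matrix_mult_right cscale_cscale
        cscale_add mult_ac add_ac)
  then show ?thesis
    using assms perp_map_P_sandwich by (simp add: clinear_map_def perp_add perp_cscale)
qed

lemma perp_positive_tp_compress:
  assumes S: "positive_tp S" and SP: "S P = P" and X: "psd X"
  shows "perp (S X) = perp (S (Q ** X ** Q))"
proof -
  have lin: "clinear_map S"
    using S by (simp add: positive_tp_def)
  have "nonneg_c (cnj t * perp (S (P ** X ** Q)) + t * perp (S (Q ** X ** P))
      + t * cnj t * perp (S (Q ** X ** Q)))" for t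
  proof -
    have "psd (S ((P + cscale t Q) ** X ** cadjoint (P + cscale t Q)))"
      by (intro positive_tpD(3)[OF S] psd_congruence X)
    then show ?thesis
      using psd_perp_nonneg perp_sandwich_expansion[OF lin SP] by metis
  qed
  then have "perp (S (P ** X ** Q)) = 0 \<and> perp (S (Q ** X ** P)) = 0"
    by (rule nonneg_c_hermitian_quadratic_imp_zero)
  moreover have "S X = S (P ** X ** P) + S (P ** X ** Q) + S (Q ** X ** P) + S (Q ** X ** Q)"
    using block_decomposition[of X] positive_tpD(1)[OF S] by metis
  ultimately show ?thesis
    using perp_map_P_sandwich[OF lin SP] by (simp add: perp_add)
qed

lemma perp_positive_tp_decrease:
  assumes S: "positive_tp S" and SP: "S P = P" and X: "psd X"
  shows "perp (S X) = perp X - fid (S (Q ** X ** Q))"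
proof -
  have "perp X = ctrace (S (Q ** X ** Q))"
    using ctrace_eq_fid_add_perp[of "Q ** X ** Q"] positive_tpD(4)[OF S]
    by (simp add: fid_Q_sandwich perp_Q_sandwich)
  also have "\<dots> = fid (S (Q ** X ** Q)) + perp (S X)"
    using ctrace_eq_fid_add_perp perp_positive_tp_compress[OF S SP X] by simp
  finally show ?thesis by simp
qed

lemma density_perp_zero_imp_eq_P:
  assumes d: "density \<sigma>" and perp0: "perp \<sigma> = 0"
  shows "\<sigma> = P"
proof -
  have p: "psd \<sigma>" using d by (simp add: density_def)
  define w where "w j = Q *v axis j 1" for j
  have sum0: "(\<Sum>j\<in>UNIV. cinner (w j) (\<sigma> *v w j)) = 0"
    using perp0 by (simp add: perp_def ctrace_def matrix_triple_product_entry cadjoint_Q w_def)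
  have nonneg: "nonneg_c (cinner (w j) (\<sigma> *v w j))" for j
    using p by (simp add: psd_def)
  have zero: "cinner (w j) (\<sigma> *v w j) = 0" for j
    by (rule nonneg_c_sum_eq_zero[OF finite nonneg sum0 UNIV_I])
  have null: "cinner v (\<sigma> *v w j) = 0" "cinner (w j) (\<sigma> *v v) = 0" for v j
    using psd_null_vector[OF p zero] by simp_all
  have right_Q: "A ** \<sigma> ** Q = 0" for A :: "complex^'n^'n"
    by (simp add: vec_eq_iff matrix_triple_product_entry null(1) flip: w_def)
  have left_Q: "Q ** \<sigma> ** C = 0" for C :: "complex^'n^'n"
    by (simp add: vec_eq_iff matrix_triple_product_entry cadjoint_Q null(2) flip: w_def)
  have fid1: "fid \<sigma> = 1"
    using d perp0 ctrace_eq_fid_add_perp[of \<sigma>] by (simp add: density_def)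
  have "\<sigma> = P ** \<sigma> ** P + P ** \<sigma> ** Q + Q ** \<sigma> ** P + Q ** \<sigma> ** Q"
    by (rule block_decomposition)
  also have "\<dots> = cscale (fid \<sigma>) P"
    by (simp only: right_Q left_Q P_sandwich add_0_right)
  also have "\<dots> = P"
    by (simp add: fid1 cscale_def vec_eq_iff)
  finally show ?thesis .
qed

end

section \<open>Channels with a pure fixed state\<close>

locale pure_fixed_channel = unit_vector \<psi> for \<psi> :: "complex^'n::finite" +
  fixes \<tau> :: "complex^'n^'n \<Rightarrow> complex^'n^'n"
  assumes channel: "quantum_channel \<tau>" and ergodic: "ergodic \<tau>"
    and fixes_ketbra: "\<tau> (ketbra \<psi>) = ketbra \<psi>"
begin

lemma positive_tp_funpow_tau: "positive_tp (\<tau> ^^ k)"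
  by (intro positive_tp_funpow quantum_channel_imp_positive_tp channel)

lemma funpow_tau_P: "(\<tau> ^^ k) P = P"
  by (induction k) (simp_all add: P_def fixes_ketbra)

lemma density_funpow_tau: "density \<rho> \<Longrightarrow> density ((\<tau> ^^ k) \<rho>)"
  by (rule positive_tp_density[OF positive_tp_funpow_tau])

lemma linear_funpow_tau: "linear (\<tau> ^^ k)"
  using positive_tp_funpow_tau by (simp add: positive_tp_def clinear_map_imp_linear)

definition orthogonal_orbit :: "(complex^'n^'n) set" where
  "orthogonal_orbit = {\<rho>. density \<rho> \<and> (\<forall>k. fid ((\<tau> ^^ k) \<rho>) = 0)}"

lemma orthogonal_orbit_empty: "orthogonal_orbit = {}"
proof (rule ccontr)
  assume nonempty: "orthogonal_orbit \<noteq> {}"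
  have orbit_eq: "orthogonal_orbit = {X. density X} \<inter> (\<Inter>k. (fid \<circ> (\<tau> ^^ k)) -` {0})"
    by (auto simp: orthogonal_orbit_def)
  have lin: "linear (fid \<circ> (\<tau> ^^ k))" for k
    by (intro linear_compose linear_funpow_tau linear_fid)
  have "compact orthogonal_orbit"
    unfolding orbit_eq using lin
    by (intro compact_Int_closed compact_density closed_INT ballI continuous_closed_vimage)
      (auto simp: linear_continuous_at linear_conv_bounded_linear)
  moreover have "convex orthogonal_orbit"
    unfolding orbit_eq using lin
    by (intro convex_Int convex_density convex_INT convex_linear_vimage convex_singleton)
  moreover have "continuous_on orthogonal_orbit \<tau>"
    using linear_funpow_tau[of 1] by (simp add: linear_continuous_on linear_conv_bounded_linear)
  moreover have "\<tau> \<in> orthogonal_orbit \<rightarrow> orthogonal_orbit"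
  proof
    fix \<rho> assume "\<rho> \<in> orthogonal_orbit"
    then have "density \<rho>" and "fid ((\<tau> ^^ Suc k) \<rho>) = 0" for k
      by (auto simp: orthogonal_orbit_def simp del: funpow.simps)
    moreover have "density (\<tau> \<rho>)"
      using density_funpow_tau[OF \<open>density \<rho>\<close>, of 1] by simp
    ultimately show "\<tau> \<rho> \<in> orthogonal_orbit"
      by (simp add: orthogonal_orbit_def funpow_Suc_right del: funpow.simps)
  qed
  ultimately obtain \<rho> where \<rho>: "\<rho> \<in> orthogonal_orbit" and "\<tau> \<rho> = \<rho>"
    using brouwer nonempty by metis
  then have "\<rho> = P"
    using ergodic fixes_ketbra density_P by (auto simp: ergodic_def orthogonal_orbit_def P_def)
  then show False
    using \<rho> fid_P by (auto simp: orthogonal_orbit_def dest: spec[of _ 0])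
qed

lemma perp_tau_orbit_decseq:
  assumes "density \<rho>"
  shows "decseq (\<lambda>n. Re (perp ((\<tau> ^^ n) \<rho>)))"
proof (rule decseq_SucI)
  fix n
  let ?X = "(\<tau> ^^ n) \<rho>"
  have "psd ?X"
    using density_funpow_tau[OF assms] by (simp add: density_def)
  then have "perp (\<tau> ?X) = perp ?X - fid (\<tau> (Q ** ?X ** Q))"
    and "nonneg_c (fid (\<tau> (Q ** ?X ** Q)))"
    using perp_positive_tp_decrease[OF positive_tp_funpow_tau[of 1]] funpow_tau_P[of 1]
      psd_fid_nonneg positive_tpD(3)[OF positive_tp_funpow_tau[of 1]] psd_congruence[of ?X Q]
    by (simp_all add: cadjoint_Q)
  then show "Re (perp ((\<tau> ^^ Suc n) \<rho>)) \<le> Re (perp ?X)"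
    by (simp add: nonneg_c_def)
qed

lemma invariant_perp_imp_eq_P:
  assumes \<sigma>: "density \<sigma>" and invariant: "\<And>k. perp ((\<tau> ^^ k) \<sigma>) = perp \<sigma>"
  shows "\<sigma> = P"
proof (rule ccontr)
  assume "\<sigma> \<noteq> P"
  then have nonzero: "perp \<sigma> \<noteq> 0"
    using density_perp_zero_imp_eq_P[OF \<sigma>] by blast
  have psd: "psd \<sigma>"
    using \<sigma> by (simp add: density_def)
  define \<rho> where "\<rho> = cscale (1 / perp \<sigma>) (Q ** \<sigma> ** Q)"
  have "psd \<rho>"
    unfolding \<rho>_def using psd_perp_nonneg[OF psd] psd_congruence[OF psd, of Q]
    by (intro psd_cscale) (auto simp: cadjoint_Q nonneg_c_def Re_divide Im_divide)
  moreover have "ctrace \<rho> = 1"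
    using nonzero by (simp add: \<rho>_def ctrace_cscale flip: perp_def)
  moreover have "fid ((\<tau> ^^ k) \<rho>) = 0" for k
    using perp_positive_tp_decrease[OF positive_tp_funpow_tau funpow_tau_P psd, of k] invariant[of k]
    by (simp add: \<rho>_def positive_tpD(2)[OF positive_tp_funpow_tau] fid_cscale)
  ultimately have "\<rho> \<in> orthogonal_orbit"
    by (simp add: orthogonal_orbit_def density_def)
  then show False
    using orthogonal_orbit_empty by simp
qed

lemma orbit_limit_point_eq_P:
  assumes \<rho>: "density \<rho>" and "strict_mono s" and lim: "(\<lambda>n. (\<tau> ^^ s n) \<rho>) \<longlonglongrightarrow> \<sigma>"
  shows "\<sigma> = P"
proof (rule invariant_perp_imp_eq_P)
  show \<sigma>: "density \<sigma>"
    using closed_sequentially[OF closed_density _ lim] density_funpow_tau[OF \<rho>] by simp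
  define G where "G n = Re (perp ((\<tau> ^^ n) \<rho>))" for n
  have "decseq G"
    unfolding G_def by (rule perp_tau_orbit_decseq[OF \<rho>])
  moreover have "\<forall>n. 0 \<le> G n"
    using psd_perp_nonneg density_funpow_tau[OF \<rho>] by (simp add: G_def density_def nonneg_c_def)
  ultimately obtain L where GL: "G \<longlonglongrightarrow> L"
    using decseq_convergent by blast
  have "Re (perp ((\<tau> ^^ k) \<sigma>)) = L" for k
  proof -
    have "linear (\<lambda>X. Re (perp ((\<tau> ^^ k) X)))"
      using linear_compose[OF linear_compose[OF linear_funpow_tau linear_perp]
          bounded_linear.linear[OF bounded_linear_Re]]
      by (simp add: o_def)
    then have "bounded_linear (\<lambda>X. Re (perp ((\<tau> ^^ k) X)))"
      by (simp add: linear_conv_bounded_linear)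
    then have "(\<lambda>n. Re (perp ((\<tau> ^^ k) ((\<tau> ^^ s n) \<rho>)))) \<longlonglongrightarrow> Re (perp ((\<tau> ^^ k) \<sigma>))"
      using lim by (rule bounded_linear.tendsto)
    moreover have "(\<lambda>n. Re (perp ((\<tau> ^^ k) ((\<tau> ^^ s n) \<rho>)))) = G \<circ> (\<lambda>n. k + s n)"
      by (simp add: G_def fun_eq_iff funpow_add)
    moreover have "(G \<circ> (\<lambda>n. k + s n)) \<longlonglongrightarrow> L"
      using GL \<open>strict_mono s\<close> by (intro LIMSEQ_subseq_LIMSEQ) (simp_all add: strict_mono_def)
    ultimately show ?thesis
      using LIMSEQ_unique by metis
  qed
  moreover have "Im (perp ((\<tau> ^^ k) \<sigma>)) = 0" for k
    using psd_perp_nonneg density_funpow_tau[OF \<sigma>] by (simp add: density_def nonneg_c_def)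
  ultimately show "perp ((\<tau> ^^ k) \<sigma>) = perp \<sigma>" for k
    by (metis complex_eq_iff funpow_0)
qed

lemma tendsto_P: "density \<rho> \<Longrightarrow> (\<lambda>m. (\<tau> ^^ m) \<rho>) \<longlonglongrightarrow> P"
  using compact_imp_seq_compact[OF compact_density]
  by (rule tendsto_if_subseq_limits_eq)
    (auto simp: density_funpow_tau comp_def intro: orbit_limit_point_eq_P)

end

theorem mainTheorem15:
  fixes \<tau> :: "complex^'n::finite^'n \<Rightarrow> complex^'n^'n" and \<psi>1 :: "complex^'n"
  assumes "quantum_channel \<tau>"
    and "ergodic \<tau>"
    and "cinner \<psi>1 \<psi>1 = 1"
    and "\<tau> (ketbra \<psi>1) = ketbra \<psi>1"
  shows "mixing \<tau> \<and> (\<forall>\<rho>. density \<rho> \<longrightarrow> (\<lambda>m. (\<tau> ^^ m) \<rho>) \<longlonglongrightarrow> ketbra \<psi>1)"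
proof -
  interpret pure_fixed_channel \<psi>1 \<tau>
    using assms by unfold_locales
  have "\<forall>\<rho>. density \<rho> \<longrightarrow> (\<lambda>m. (\<tau> ^^ m) \<rho>) \<longlonglongrightarrow> ketbra \<psi>1"
    using tendsto_P by (simp add: P_def)
  moreover have "density (ketbra \<psi>1)"
    using density_P by (simp add: P_def)
  ultimately show ?thesis
    unfolding mixing_def by blast
qed

end
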